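(* Let $\Omega$ be a pointed solid closed convex cone in a finite-dimensional real inner product space $X$ with $\Omega^*$ facially compact and locally smooth, $1\le j\le d$, and $(E,F)\in\mathcal P_j$. Then the orthogonal projection $p$ of $X$ onto $E_{1/2}(F)$ is injective on some neighbourhood of $e_F(E)$ in $\mathbf e(\xi^{-1}(E))=\{e_G(E):(E,G)\in\mathcal P_j\}$.
   Context: $A^*=\{y:\langle y,a\rangle\ge0\ \forall a\in A\}$, $A^\circledast=A^*\cap\operatorname{span}A$. Faces: subsets $F$ of a convex set such that every segment with midpoint in $F$ lies in $F$. $0=n_0<\dots<n_d=\dim X$ are the dimensions of faces of $\Omega^*$, $P_j$ the faces of dimension $n_{d-j}$ with the Fell topology; facially compact: each $P_j$ compact. Modular face of a cone $C$: a face $E$ containing a face of dimension $\max\{\dim G:G\text{ face of }C,\dim G<\dim E\}$; smooth: the relative interiors of those maximal-dimensional proper faces consist of regular points of $E$; locally smooth: all modular faces smooth. $\mathcal P_j=\{(E,F)\in P_{j-1}\times P_j:E\supset F\}$, $\xi(E,F)=E$; $e_F(E)$ is the unit generator of the extreme ray $F^\perp\cap E^\circledast$ of $E^\circledast$; $E_{1/2}(F)=\operatorname{span}(E)\cap F^\perp\cap e_F(E)^\perp$. *)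

theory Defs
  imports "HOL-Analysis.Analysis"
begin

definition dual_cone :: "'a::real_inner set \<Rightarrow> 'a set" where
  "dual_cone A = {y. \<forall>a\<in>A. inner y a \<ge> 0}"

definition dual_cone_span :: "'a::real_inner set \<Rightarrow> 'a set" where
  "dual_cone_span A = dual_cone A \<inter> span A"

definition face_dims :: "'a::euclidean_space set \<Rightarrow> int set" where
  "face_dims C = {aff_dim F | F. F face_of C \<and> F \<noteq> {}}"

definition face_dim_seq :: "'a::euclidean_space set \<Rightarrow> nat \<Rightarrow> int" where
  "face_dim_seq C k = sorted_list_of_set (face_dims C) ! k"

definition face_depth :: "'a::euclidean_space set \<Rightarrow> nat" where
  "face_depth C = card (face_dims C) - 1"

definition face_layer :: "'a::euclidean_space set \<Rightarrow> nat \<Rightarrow> 'a set set" where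
  "face_layer C j = {F. F face_of C \<and> F \<noteq> {} \<and> aff_dim F = face_dim_seq C (face_depth C - j)}"

definition fell_topology :: "'a::topological_space set topology" where
  "fell_topology = topology_generated_by
     ({{A. closed A \<and> A \<inter> K = {}} | K. compact K} \<union>
      {{A. closed A \<and> A \<inter> U \<noteq> {}} | U. open U})"

definition facially_compact :: "'a::euclidean_space set \<Rightarrow> bool" where
  "facially_compact C = (\<forall>j\<le>face_depth C. compactin fell_topology (face_layer C j))"

text \<open>Regular point of a convex cone E: at most one supporting hyperplane (within span E),
  i.e. the face of E^circledast exposed by x is at most a ray.\<close>
definition regular_point :: "'a::euclidean_space set \<Rightarrow> 'a \<Rightarrow> bool" where
  "regular_point E x \<longleftrightarrow> x \<in> E \<and> aff_dim (dual_cone_span E \<inter> orthogonal_comp {x}) \<le> 1"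

definition maximal_lower_face :: "'a::euclidean_space set \<Rightarrow> 'a set \<Rightarrow> 'a set \<Rightarrow> bool" where
  "maximal_lower_face C E G \<longleftrightarrow> G face_of C \<and> G \<noteq> {} \<and> aff_dim G < aff_dim E \<and>
     (\<forall>H. H face_of C \<and> H \<noteq> {} \<and> aff_dim H < aff_dim E \<longrightarrow> aff_dim H \<le> aff_dim G)"

definition modular_face :: "'a::euclidean_space set \<Rightarrow> 'a set \<Rightarrow> bool" where
  "modular_face C E \<longleftrightarrow> E face_of C \<and> (\<exists>G. G \<subseteq> E \<and> maximal_lower_face C E G)"

definition smooth_face :: "'a::euclidean_space set \<Rightarrow> 'a set \<Rightarrow> bool" where
  "smooth_face C E \<longleftrightarrow>
     (\<forall>G. G face_of E \<and> G \<noteq> E \<and> maximal_lower_face C E G \<longrightarrow>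
          (\<forall>x\<in>rel_interior G. regular_point E x))"

definition locally_smooth :: "'a::euclidean_space set \<Rightarrow> bool" where
  "locally_smooth C \<longleftrightarrow> (\<forall>E. modular_face C E \<longrightarrow> smooth_face C E)"

definition flag_pairs :: "'a::euclidean_space set \<Rightarrow> nat \<Rightarrow> ('a set \<times> 'a set) set" where
  "flag_pairs C j = {(E, F). E \<in> face_layer C (j - 1) \<and> F \<in> face_layer C j \<and> F \<subseteq> E}"

definition e_vec :: "'a::euclidean_space set \<Rightarrow> 'a set \<Rightarrow> 'a" where
  "e_vec F E = (SOME u. norm u = 1 \<and>
      orthogonal_comp F \<inter> dual_cone_span E = {t *\<^sub>R u | t. t \<ge> 0})"

definition half_space :: "'a::euclidean_space set \<Rightarrow> 'a set \<Rightarrow> 'a set" where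
  "half_space E F = span E \<inter> orthogonal_comp F \<inter> orthogonal_comp {e_vec F E}"

end

theory Submission
  imports Defs
begin

(*
  For a face G of the layer P_j contained in E, smoothness of the modular face E makes the normal
  cone of E along G a single ray, so e_G(E) is a unit vector of E^circledast vanishing on G.
  Suppose u = e_G(E) and v = e_H(E) are close to e = e_F(E) and have the same projection onto
  E_1/2(F). Then c = v - u lies in span E and is orthogonal to E_1/2(F), so it is determined by
  its inner products with e and with a basis of F, and it suffices to show that all of these are
  small compared with |c|. For e this holds because u and v are unit vectors near e. For a point
  y of F we use Fell compactness of P_j: every face of P_j other than F is separated from F by e,
  so faces whose normals are close to e must come close to y; as c is nonnegative on G and
  nonpositive on H, the inner product of c with y is small. Hence c = 0.
*)

section \<open>Dual cones and normal rays of smooth faces\<close>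

lemma convex_dual_cone: "convex (dual_cone A)"
  unfolding dual_cone_def convex_def
  by (auto simp: inner_add_left intro!: add_nonneg_nonneg mult_nonneg_nonneg)

lemma closed_dual_cone: "closed (dual_cone A)"
proof -
  have "dual_cone A = (\<Inter>a\<in>A. {y. inner a y \<ge> 0})"
    unfolding dual_cone_def by (auto simp: inner_commute)
  then show ?thesis by (auto intro!: closed_halfspace_ge)
qed

lemma conic_dual_cone: "conic (dual_cone A)"
  unfolding conic_def dual_cone_def by auto

lemma conic_dual_cone_span: "conic (dual_cone_span A)"
  unfolding conic_def dual_cone_span_def dual_cone_def by (auto simp: span_mul)

lemma conic_orthogonal_comp: "conic (orthogonal_comp A)"
  by (simp add: subspace_imp_conic subspace_orthogonal_comp)

lemma dual_cone_orthogonal_rel_interior: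
  fixes G E :: "'a::euclidean_space set"
  assumes "convex G" "G \<subseteq> E" "x \<in> rel_interior G"
  shows "dual_cone E \<inter> orthogonal_comp {x} \<subseteq> orthogonal_comp G"
proof
  fix y assume y: "y \<in> dual_cone E \<inter> orthogonal_comp {x}"
  then have yE: "\<And>w. w \<in> E \<Longrightarrow> inner y w \<ge> 0" and yx: "inner y x = 0"
    unfolding dual_cone_def orthogonal_comp_def orthogonal_def by (auto simp: inner_commute)
  have "inner y g = 0" if g: "g \<in> G" for g
  proof -
    \<comment> \<open>x is interior to G, so G contains a point beyond x on the ray from g through x\<close>
    obtain m where m: "m > 1" "(1 - m) *\<^sub>R g + m *\<^sub>R x \<in> G"
      using convex_rel_interior_if[OF assms(1,3)] hull_inc[OF g] by blast
    then have "(1 - m) * inner y g \<ge> 0"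
      using yE assms(2) yx by (fastforce simp: inner_add_right)
    then have "inner y g \<le> 0" using m(1) by (simp add: zero_le_mult_iff)
    then show ?thesis using yE g assms(2) by force
  qed
  then show "y \<in> orthogonal_comp G"
    unfolding orthogonal_comp_def orthogonal_def by (auto simp: inner_commute)
qed

lemma exists_dual_normal_rel_boundary:
  fixes E :: "'a::euclidean_space set"
  assumes "convex E" "conic E" "x \<in> E" "x \<notin> rel_interior E"
  obtains a where "a \<in> dual_cone_span E" "inner a x = 0" "\<And>q. q \<in> rel_interior E \<Longrightarrow> 0 < inner a q"
proof -
  obtain b where ble: "\<And>y. y \<in> E \<Longrightarrow> inner b x \<le> inner b y"
    and blt: "\<And>y. y \<in> rel_interior E \<Longrightarrow> inner b x < inner b y"
    using supporting_hyperplane_rel_boundary[OF assms(1,3,4)] by metis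
  \<comment> \<open>the component a of b in span E has the same values on E\<close>
  obtain a c where a: "a \<in> span E" and c: "\<And>w. w \<in> span E \<Longrightarrow> orthogonal c w" and "b = a + c"
    using orthogonal_subspace_decomp_exists[of E b] by metis
  then have ab: "inner b w = inner a w" if "w \<in> E" for w
    using c[OF span_base[OF that]] by (simp add: orthogonal_def inner_add_left)
  have "inner b x \<le> inner b 0" using ble assms(2,3) conic_contains_0 by blast
  moreover have "inner b x \<le> inner b (2 *\<^sub>R x)" using ble[OF conicD[OF assms(2,3), of 2]] by simp
  ultimately have ax: "inner a x = 0" using ab assms(3) by simp
  show thesis
  proof
    show "a \<in> dual_cone_span E"
      using a ble ab ax assms(3) unfolding dual_cone_span_def dual_cone_def
      by (auto simp: inner_commute)
    show "0 < inner a q" if "q \<in> rel_interior E" for q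
      using blt[OF that] ab ax assms(3) rel_interior_subset that by fastforce
  qed (fact ax)
qed

lemma collinear_conic_eq_ray:
  fixes D :: "'a::euclidean_space set"
  assumes "collinear D" "conic D" "a \<in> D" "0 < inner a q" "\<And>z. z \<in> D \<Longrightarrow> 0 \<le> inner z q"
  shows "D = {t *\<^sub>R a | t. 0 \<le> t}"
proof
  show "{t *\<^sub>R a | t. 0 \<le> t} \<subseteq> D" using assms(2,3) by (auto intro: conicD)
  show "D \<subseteq> {t *\<^sub>R a | t. 0 \<le> t}"
  proof
    fix z assume z: "z \<in> D"
    have "0 \<in> D" using conic_contains_0[OF assms(2)] assms(3) by auto
    then have "{0, a, z} \<subseteq> D" using assms(3) z by blast
    then have "collinear {0, a, z}" using collinear_subset[OF assms(1)] by blast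
    moreover have "a \<noteq> 0" using assms(4) by auto
    ultimately have "z = 0 \<or> (\<exists>t. z = t *\<^sub>R a)" by (simp add: collinear_lemma)
    then obtain t where t: "z = t *\<^sub>R a" by (metis scale_zero_left)
    then have "0 \<le> t * inner a q" using assms(5)[OF z] by simp
    then have "0 \<le> t" using assms(4) by (simp add: zero_le_mult_iff)
    then show "z \<in> {t *\<^sub>R a | t. 0 \<le> t}" using t by blast
  qed
qed

lemma e_vec_of_ray:
  assumes "orthogonal_comp G \<inter> dual_cone_span E = {t *\<^sub>R a | t. 0 \<le> t}" "a \<noteq> 0"
  shows "norm (e_vec G E) = 1 \<and> e_vec G E \<in> orthogonal_comp G \<inter> dual_cone_span E"
proof -
  define u where "u = a /\<^sub>R norm a"
  have "{t *\<^sub>R a | t. 0 \<le> t} = {t *\<^sub>R u | t. 0 \<le> t}"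
  proof (intro set_eqI iffI)
    fix z assume "z \<in> {t *\<^sub>R a | t. 0 \<le> t}"
    then obtain t where "0 \<le> t" "z = t *\<^sub>R a" by blast
    then have "0 \<le> t * norm a" "z = (t * norm a) *\<^sub>R u" using assms(2) by (auto simp: u_def)
    then show "z \<in> {t *\<^sub>R u | t. 0 \<le> t}" by blast
  qed (auto simp: u_def)
  then have "\<exists>u. norm u = 1 \<and> orthogonal_comp G \<inter> dual_cone_span E = {t *\<^sub>R u | t. 0 \<le> t}"
    using assms by (intro exI[of _ u]) (simp add: u_def)
  then have "norm (e_vec G E) = 1 \<and> orthogonal_comp G \<inter> dual_cone_span E = {t *\<^sub>R e_vec G E | t. 0 \<le> t}"
    unfolding e_vec_def by (rule someI_ex)
  moreover have "e_vec G E \<in> {t *\<^sub>R e_vec G E | t. 0 \<le> t}" by (auto intro: exI[of _ 1])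
  ultimately show ?thesis by simp
qed

lemma e_vec_regular_face:
  fixes E G :: "'a::euclidean_space set"
  assumes "convex E" "conic E" "G face_of E" "G \<noteq> E" "G \<noteq> {}"
    and regular: "\<And>x. x \<in> rel_interior G \<Longrightarrow> regular_point E x"
  shows "norm (e_vec G E) = 1 \<and> e_vec G E \<in> orthogonal_comp G \<inter> dual_cone_span E"
proof -
  have "convex G" and GE: "G \<subseteq> E" using face_of_imp_convex[OF assms(3)] face_of_imp_subset[OF assms(3)] .
  then obtain x where x: "x \<in> rel_interior G" using assms(5) rel_interior_eq_empty by blast
  then have xG: "x \<in> G" using rel_interior_subset by blast
  have "x \<notin> rel_interior E" using face_of_disjoint_rel_interior[OF assms(3,4)] xG by blast
  then obtain a where a: "a \<in> dual_cone_span E" "inner a x = 0"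
    and apos: "\<And>q. q \<in> rel_interior E \<Longrightarrow> 0 < inner a q"
    using exists_dual_normal_rel_boundary[OF assms(1,2)] xG GE by blast
  obtain q where q: "q \<in> rel_interior E"
    using assms(1,5) GE rel_interior_eq_empty by blast
  define D where "D = orthogonal_comp G \<inter> dual_cone_span E"
  have "D \<subseteq> dual_cone_span E \<inter> orthogonal_comp {x}"
    unfolding D_def orthogonal_comp_def using xG by auto
  moreover have "dual_cone_span E \<inter> orthogonal_comp {x} \<subseteq> D"
    using dual_cone_orthogonal_rel_interior[OF \<open>convex G\<close> GE x]
    unfolding D_def dual_cone_span_def by blast
  ultimately have D: "D = dual_cone_span E \<inter> orthogonal_comp {x}" by (rule antisym)
  have "collinear D"
    using regular[OF x] unfolding D regular_point_def collinear_aff_dim by blast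
  moreover have "a \<in> D"
    unfolding D orthogonal_comp_def orthogonal_def using a by (simp add: inner_commute)
  moreover have "conic D"
    unfolding D_def conic_def using conicD[OF conic_orthogonal_comp] conicD[OF conic_dual_cone_span] by blast
  moreover have "0 \<le> inner z q" if "z \<in> D" for z
    using that q rel_interior_subset unfolding D_def dual_cone_span_def dual_cone_def by blast
  ultimately have "D = {t *\<^sub>R a | t. 0 \<le> t}"
    using collinear_conic_eq_ray apos[OF q] by blast
  moreover have "a \<noteq> 0" using apos[OF q] by auto
  ultimately show ?thesis using e_vec_of_ray unfolding D_def by blast
qed

section \<open>Consecutive layers of faces\<close>

lemma finite_face_dims: "finite (face_dims (C::'a::euclidean_space set))"
proof -
  have "face_dims C \<subseteq> {-1..int DIM('a)}"
    unfolding face_dims_def using aff_dim_geq aff_dim_le_DIM by fastforce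
  then show ?thesis using finite_subset by blast
qed

lemma face_layer_maximal_lower_face:
  fixes C :: "'a::euclidean_space set"
  assumes "1 \<le> j" "j \<le> face_depth C" "E \<in> face_layer C (j - 1)" "G \<in> face_layer C j"
  shows "maximal_lower_face C E G"
proof -
  define L where "L = sorted_list_of_set (face_dims C)"
  define k where "k = face_depth C - j"
  have setL: "set L = face_dims C" and sorted: "sorted L" and "distinct L"
    unfolding L_def using finite_face_dims[of C] by simp_all
  have kL: "Suc k < length L"
    using assms(1,2) unfolding k_def face_depth_def L_def by simp
  have dimE: "aff_dim E = L ! Suc k" and dimG: "aff_dim G = L ! k"
    using assms(1-4) unfolding face_layer_def face_dim_seq_def L_def k_def
    by (simp_all add: Suc_diff_le)
  have "L ! k \<noteq> L ! Suc k" using nth_eq_iff_index_eq[OF \<open>distinct L\<close>] kL by simp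
  then have "aff_dim G < aff_dim E"
    using sorted_nth_mono[OF sorted, of k "Suc k"] kL dimE dimG by simp
  moreover have "aff_dim H \<le> aff_dim G"
    if H: "H face_of C" "H \<noteq> {}" "aff_dim H < aff_dim E" for H
  proof -
    obtain i where i: "i < length L" "L ! i = aff_dim H"
      using H(1,2) setL unfolding face_dims_def by (metis (mono_tags, lifting) in_set_conv_nth mem_Collect_eq)
    have "i \<le> k"
      using sorted_nth_mono[OF sorted, of "Suc k" i] i H(3) dimE by fastforce
    then show ?thesis using sorted_nth_mono[OF sorted, of i k] kL i dimG by simp
  qed
  ultimately show ?thesis
    using assms(4) unfolding maximal_lower_face_def face_layer_def by blast
qed

lemma e_vec_maximal_lower_face:
  fixes C :: "'a::euclidean_space set"
  assumes "convex C" "conic C" "locally_smooth C" "E face_of C"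
    and G: "maximal_lower_face C E G" "G \<subseteq> E"
  shows "norm (e_vec G E) = 1 \<and> e_vec G E \<in> orthogonal_comp G \<inter> dual_cone_span E"
proof (rule e_vec_regular_face)
  show "convex E" "conic E" using assms(2,4) face_of_imp_convex face_of_conic by blast+
  show "G face_of E" "G \<noteq> E" "G \<noteq> {}"
    using G face_of_subset[of G C E] face_of_imp_subset[OF assms(4)]
    unfolding maximal_lower_face_def by auto
  have "smooth_face C E"
    using assms(3,4) G unfolding locally_smooth_def modular_face_def by blast
  then show "regular_point E x" if "x \<in> rel_interior G" for x
    using that G \<open>G face_of E\<close> \<open>G \<noteq> E\<close> unfolding smooth_face_def by blast
qed

text \<open>If e vanished on G, the face of E exposed by e would contain F and G; by maximality of
  dim F it would have the dimension of both, hence equal both.\<close>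
lemma maximal_lower_face_exists_pos_inner:
  fixes C :: "'a::euclidean_space set"
  assumes "convex C" "E face_of C"
    and F: "maximal_lower_face C E F" "F \<subseteq> E" and G: "maximal_lower_face C E G" "G \<subseteq> E" "G \<noteq> F"
    and e: "e \<in> orthogonal_comp F \<inter> dual_cone_span E" "e \<noteq> 0"
  shows "\<exists>g\<in>G. 0 < inner e g"
proof (rule ccontr)
  assume "\<not> (\<exists>g\<in>G. 0 < inner e g)"
  have eE: "0 \<le> inner e x" if "x \<in> E" for x
    using e that unfolding dual_cone_span_def dual_cone_def by blast
  define \<Phi> where "\<Phi> = E \<inter> {x. inner e x = 0}"
  have "convex E" using assms(2) face_of_imp_convex by blast
  then have "\<Phi> face_of E" unfolding \<Phi>_def
    using face_of_Int_supporting_hyperplane_ge[where a=e and b=0] eE by simp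
  then have \<Phi>C: "\<Phi> face_of C" using assms(2) face_of_trans by blast
  have "\<Phi> \<noteq> E"
  proof
    assume "\<Phi> = E"
    then have "orthogonal e e"
      using orthogonal_to_span[of e E e] e unfolding \<Phi>_def dual_cone_span_def orthogonal_def by blast
    then show False using e(2) by (simp add: orthogonal_def)
  qed
  then have "aff_dim \<Phi> < aff_dim E" using face_of_aff_dim_lt[OF \<open>convex E\<close> \<open>\<Phi> face_of E\<close>] by blast
  have F\<Phi>: "F \<subseteq> \<Phi>" using F(2) e unfolding \<Phi>_def orthogonal_comp_def orthogonal_def
    by (auto simp: inner_commute)
  have G\<Phi>: "G \<subseteq> \<Phi>" using G(2) eE \<open>\<not> (\<exists>g\<in>G. 0 < inner e g)\<close> unfolding \<Phi>_def by force
  have eq\<Phi>: "H = \<Phi>" if H: "maximal_lower_face C E H" "H \<subseteq> \<Phi>" for H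
  proof (rule ccontr)
    assume "H \<noteq> \<Phi>"
    moreover have "H face_of \<Phi>"
      using H face_of_subset face_of_imp_subset[OF \<Phi>C] unfolding maximal_lower_face_def by blast
    ultimately have "aff_dim H < aff_dim \<Phi>"
      using face_of_aff_dim_lt face_of_imp_convex[OF \<Phi>C] by blast
    moreover have "\<Phi> \<noteq> {}" using H(1,2) \<open>H \<noteq> \<Phi>\<close> unfolding maximal_lower_face_def by blast
    ultimately show False
      using H(1) \<Phi>C \<open>aff_dim \<Phi> < aff_dim E\<close> unfolding maximal_lower_face_def by fastforce
  qed
  show False using eq\<Phi>[OF F(1) F\<Phi>] eq\<Phi>[OF G(1) G\<Phi>] G(3) by simp
qed

section \<open>Fell compactness\<close>

lemma openin_fell_topology_hitting:
  "open U \<Longrightarrow> openin fell_topology {A. closed A \<and> A \<inter> U \<noteq> {}}"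
  unfolding fell_topology_def by (rule topology_generated_by_Basis) blast

lemma dist_ge_if_annihilates_near:
  fixes e g g' w :: "'a::real_inner"
  assumes "norm e = 1" "0 < s" "inner e g = 2 * s" "dist g g' < s" "inner w g' = 0"
  shows "s / (norm g + s) \<le> dist w e"
proof -
  have "\<bar>inner e (g' - g)\<bar> \<le> norm (g' - g)"
    using Cauchy_Schwarz_ineq2[of e "g' - g"] assms(1) by simp
  then have "s < inner e g'"
    using assms(3,4) by (simp add: dist_norm norm_minus_commute inner_diff_right)
  also have "\<dots> = inner (e - w) g'" using assms(5) by (simp add: inner_diff_left)
  also have "\<dots> \<le> dist w e * norm g'"
    using Cauchy_Schwarz_ineq2[of "e - w" g'] by (simp add: dist_norm norm_minus_commute)
  also have "\<dots> \<le> dist w e * (norm g + s)"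
    using assms(4) norm_triangle_ineq2[of g' g]
    by (intro mult_left_mono) (auto simp: dist_norm norm_minus_commute)
  finally show ?thesis using assms(2) by (simp add: divide_le_eq add_nonneg_pos)
qed

lemma fell_neighbourhood_far_from_annihilators:
  fixes G E :: "'a::euclidean_space set"
  assumes "closed G" "closed E" "norm e = 1" and pos: "G \<subseteq> E \<Longrightarrow> \<exists>g\<in>G. 0 < inner e g"
  obtains N \<rho> where "openin fell_topology N" "G \<in> N" "0 < \<rho>"
    "\<And>G' w. G' \<in> N \<Longrightarrow> G' \<subseteq> E \<Longrightarrow> (\<And>g. g \<in> G' \<Longrightarrow> inner w g = 0) \<Longrightarrow> \<rho> \<le> dist w e"
proof (cases "G \<subseteq> E")
  case True
  then obtain g where g: "g \<in> G" "0 < inner e g" using pos by blast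
  define s where "s = inner e g / 2"
  define N where "N = {A. closed A \<and> A \<inter> ball g s \<noteq> {}}"
  have "0 < s" using g(2) by (simp add: s_def)
  show thesis
  proof
    show "openin fell_topology N" unfolding N_def by (simp add: openin_fell_topology_hitting)
    show "G \<in> N" unfolding N_def using assms(1) g(1) \<open>0 < s\<close> by auto
    show "0 < s / (norm g + s)" using \<open>0 < s\<close> by (simp add: add_nonneg_pos)
    fix G' w assume "G' \<in> N" and w: "\<And>g. g \<in> G' \<Longrightarrow> inner w g = 0"
    then obtain g' where "g' \<in> G'" "dist g g' < s" unfolding N_def by auto
    moreover have "inner e g = 2 * s" unfolding s_def by simp
    ultimately show "s / (norm g + s) \<le> dist w e"
      using dist_ge_if_annihilates_near[OF assms(3) \<open>0 < s\<close>] w by blast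
  qed
next
  case False
  then obtain g where g: "g \<in> G" "g \<notin> E" by blast
  then obtain s where "0 < s" "ball g s \<subseteq> - E"
    using assms(2) open_contains_ball[of "- E"] by (metis ComplI open_Compl)
  then have s: "0 < s" "ball g s \<inter> E = {}" by blast+
  show thesis
  proof
    show "openin fell_topology {A. closed A \<and> A \<inter> ball g s \<noteq> {}}"
      by (simp add: openin_fell_topology_hitting)
    show "G \<in> {A. closed A \<and> A \<inter> ball g s \<noteq> {}}" using assms(1) g(1) s(1) by auto
  qed (use s in auto)
qed

lemma compactin_cover_antimono:
  fixes V :: "real \<Rightarrow> 'a set"
  assumes "compactin X P" "openin X M" "\<And>\<rho>. openin X (V \<rho>)"
    and antimono: "\<And>\<rho> \<rho>'. \<rho> \<le> \<rho>' \<Longrightarrow> V \<rho>' \<subseteq> V \<rho>"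
    and cover: "P \<subseteq> M \<union> (\<Union>\<rho>\<in>{0<..}. V \<rho>)"
  shows "\<exists>r>0. P \<subseteq> M \<union> V r"
proof -
  have "P \<subseteq> \<Union>(insert M (V ` {0<..}))" using cover by blast
  moreover have "\<forall>U\<in>insert M (V ` {0<..}). openin X U" using assms(2,3) by blast
  ultimately obtain \<U> where \<U>: "finite \<U>" "\<U> \<subseteq> insert M (V ` {0<..})" "P \<subseteq> \<Union>\<U>"
    using assms(1) unfolding compactin_def by meson
  then have "\<U> - {M} \<subseteq> V ` {0<..}" by blast
  then have "\<exists>R\<subseteq>{0<..}. finite R \<and> \<U> - {M} = V ` R"
    by (rule finite_subset_image[OF finite_Diff[OF \<U>(1)]])
  then obtain R where R: "R \<subseteq> {0<..}" "finite R" and UR: "\<U> - {M} = V ` R"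
    by (elim exE conjE)
  have "P \<subseteq> M \<union> \<Union>(\<U> - {M})" using \<U>(3) by blast
  then have "P \<subseteq> M \<union> \<Union>(V ` R)" unfolding UR .
  moreover define r where "r = Min (insert 1 R)"
  then have "V \<rho> \<subseteq> V r" if "\<rho> \<in> R" for \<rho>
    using antimono R that by (intro antimono Min_le) auto
  moreover have "0 < r" unfolding r_def using R by (subst Min_gr_iff) auto
  ultimately show ?thesis by blast
qed

lemma fell_compact_hits_ball_near:
  fixes P :: "'a::euclidean_space set set" and ev :: "'a set \<Rightarrow> 'a"
  assumes compact: "compactin fell_topology P" and closed: "\<And>G. G \<in> P \<Longrightarrow> closed G"
    and "closed E" "norm e = 1"
    and ev: "\<And>G g. G \<in> P \<Longrightarrow> G \<subseteq> E \<Longrightarrow> g \<in> G \<Longrightarrow> inner (ev G) g = 0"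
    and pos: "\<And>G. G \<in> P \<Longrightarrow> G \<subseteq> E \<Longrightarrow> G \<noteq> F \<Longrightarrow> \<exists>g\<in>G. 0 < inner e g"
    and "y \<in> F" "0 < \<delta>"
  shows "\<exists>r>0. \<forall>G\<in>P. G \<subseteq> E \<longrightarrow> dist (ev G) e < r \<longrightarrow> G \<inter> ball y \<delta> \<noteq> {}"
proof -
  define M where "M = {A. closed A \<and> A \<inter> ball y \<delta> \<noteq> {}}"
  define far where "far \<rho> N \<longleftrightarrow>
    (\<forall>G'\<in>N. \<forall>w. G' \<subseteq> E \<longrightarrow> (\<forall>g\<in>G'. inner w g = 0) \<longrightarrow> \<rho> \<le> dist w e)" for \<rho> N
  define V where "V \<rho> = \<Union>{N. openin fell_topology N \<and> far \<rho> N}" for \<rho>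
  have "G \<in> M \<union> (\<Union>\<rho>\<in>{0<..}. V \<rho>)" if GP: "G \<in> P" for G
  proof (cases "G \<inter> ball y \<delta> = {}")
    case True
    then have "G \<noteq> F" using \<open>y \<in> F\<close> \<open>0 < \<delta>\<close> by auto
    then have "G \<subseteq> E \<Longrightarrow> \<exists>g\<in>G. 0 < inner e g" using pos GP by blast
    then obtain N \<rho> where N: "openin fell_topology N" "G \<in> N" "0 < \<rho>"
      and far: "\<And>G' w. G' \<in> N \<Longrightarrow> G' \<subseteq> E \<Longrightarrow> (\<And>g. g \<in> G' \<Longrightarrow> inner w g = 0) \<Longrightarrow> \<rho> \<le> dist w e"
      using fell_neighbourhood_far_from_annihilators[OF closed[OF GP] assms(3,4)] by blast
    have "far \<rho> N" unfolding far_def using far by blast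
    then show ?thesis unfolding V_def using N by blast
  qed (use closed[OF GP] M_def in blast)
  moreover have "openin fell_topology M"
    unfolding M_def by (simp add: openin_fell_topology_hitting)
  moreover have "openin fell_topology (V \<rho>)" for \<rho>
    unfolding V_def by (rule openin_Union) blast
  moreover have "V \<rho>' \<subseteq> V \<rho>" if "\<rho> \<le> \<rho>'" for \<rho> \<rho>'
  proof -
    have "far \<rho>' N \<Longrightarrow> far \<rho> N" for N using that unfolding far_def by force
    then show ?thesis unfolding V_def by blast
  qed
  ultimately obtain r where "0 < r" and cover: "P \<subseteq> M \<union> V r"
    using compactin_cover_antimono[OF compact] by (metis subsetI)
  have "G \<inter> ball y \<delta> \<noteq> {}" if G: "G \<in> P" "G \<subseteq> E" "dist (ev G) e < r" for G
  proof -
    have "G \<notin> V r"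
    proof
      assume "G \<in> V r"
      then obtain N where "G \<in> N" "far r N" unfolding V_def by blast
      then have "r \<le> dist (ev G) e" using ev[OF G(1,2)] G(2) unfolding far_def by blast
      then show False using G(3) by simp
    qed
    then show ?thesis using cover G(1) unfolding M_def by blast
  qed
  then show ?thesis using \<open>0 < r\<close> by blast
qed

section \<open>Determining a vector by a few inner products\<close>

lemma closest_point_subspace_orthogonal:
  fixes S :: "'a::euclidean_space set"
  assumes "subspace S" "h \<in> S"
  shows "inner (x - closest_point S x) h = 0"
proof -
  define p where "p = closest_point S x"
  have "p \<in> S"
    unfolding p_def using assms closest_point_in_set closed_subspace by blast
  then have "p + h \<in> S" "p - h \<in> S" using assms subspace_add subspace_diff by blast+
  then have "inner (x - p) ((p + h) - p) \<le> 0" "inner (x - p) ((p - h) - p) \<le> 0"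
    unfolding p_def using closest_point_dot assms closed_subspace subspace_imp_convex by blast+
  then show ?thesis unfolding p_def[symmetric] by (simp add: inner_diff_right)
qed

lemma subspace_norm_le_sum_abs_inner:
  fixes W :: "'a::euclidean_space set"
  assumes "subspace W" "finite B" and zero: "\<And>c. c \<in> W \<Longrightarrow> \<forall>y\<in>B. inner c y = 0 \<Longrightarrow> c = 0"
  shows "\<exists>\<kappa>>0. \<forall>c\<in>W. \<kappa> * norm c \<le> (\<Sum>y\<in>B. \<bar>inner c y\<bar>)"
proof -
  define f where "f c = (\<Sum>y\<in>B. inner c y *\<^sub>R y)" for c
  have "bounded_linear f"
    unfolding f_def
    by (intro bounded_linear_sum bounded_linear_compose[OF bounded_linear_scaleR_left bounded_linear_inner_left])
  moreover have "c = 0" if "c \<in> W" "f c = 0" for c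
  proof -
    have "(\<Sum>y\<in>B. (inner c y)\<^sup>2) = inner c (f c)"
      unfolding f_def by (simp add: inner_sum_right power2_eq_square)
    then have "\<forall>y\<in>B. inner c y = 0"
      using \<open>f c = 0\<close> sum_nonneg_eq_0_iff[OF \<open>finite B\<close>, of "\<lambda>y. (inner c y)\<^sup>2"] by simp
    then show ?thesis using zero that(1) by blast
  qed
  ultimately obtain \<epsilon> where \<epsilon>: "\<epsilon> > 0" "\<And>c. c \<in> W \<Longrightarrow> \<epsilon> * norm c \<le> norm (f c)"
    using injective_imp_isometric[OF closed_subspace[OF \<open>subspace W\<close>] \<open>subspace W\<close>] by metis
  define M where "M = 1 + (\<Sum>y\<in>B. norm y)"
  have M: "M > 0" "\<And>y. y \<in> B \<Longrightarrow> norm y \<le> M"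
    unfolding M_def using \<open>finite B\<close> member_le_sum[of _ B norm]
    by (auto simp: sum_nonneg add_pos_nonneg add_increasing)
  have "\<epsilon> / M * norm c \<le> (\<Sum>y\<in>B. \<bar>inner c y\<bar>)" if "c \<in> W" for c
  proof -
    have "\<epsilon> * norm c \<le> (\<Sum>y\<in>B. \<bar>inner c y\<bar> * norm y)"
      using \<epsilon>(2)[OF that] norm_sum[of "\<lambda>y. inner c y *\<^sub>R y" B] unfolding f_def by simp
    also have "\<dots> \<le> (\<Sum>y\<in>B. \<bar>inner c y\<bar> * M)"
      using M(2) by (intro sum_mono mult_left_mono) auto
    also have "\<dots> = M * (\<Sum>y\<in>B. \<bar>inner c y\<bar>)" by (simp add: sum_distrib_left mult.commute)
    finally show ?thesis using M(1) by (simp add: field_simps)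
  qed
  then show ?thesis using \<epsilon>(1) M(1) by (intro exI[of _ "\<epsilon> / M"]) auto
qed

lemma subspace_eq_0_if_inner_small:
  fixes W :: "'a::euclidean_space set"
  assumes "subspace W" "finite B" "\<And>c. c \<in> W \<Longrightarrow> \<forall>y\<in>B. inner c y = 0 \<Longrightarrow> c = 0"
  obtains \<delta> where "0 < \<delta>" "\<And>c. c \<in> W \<Longrightarrow> \<forall>y\<in>B. \<bar>inner c y\<bar> \<le> norm c * \<delta> \<Longrightarrow> c = 0"
proof -
  obtain \<kappa> where "0 < \<kappa>" and \<kappa>: "\<And>c. c \<in> W \<Longrightarrow> \<kappa> * norm c \<le> (\<Sum>y\<in>B. \<bar>inner c y\<bar>)"
    using subspace_norm_le_sum_abs_inner[OF assms] by blast
  define \<delta> where "\<delta> = \<kappa> / (2 * (real (card B) + 1))"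
  have "0 < \<delta>" unfolding \<delta>_def using \<open>0 < \<kappa>\<close> by simp
  moreover have "c = 0" if "c \<in> W" and small: "\<forall>y\<in>B. \<bar>inner c y\<bar> \<le> norm c * \<delta>" for c
  proof -
    have "\<kappa> * norm c \<le> real (card B) * (norm c * \<delta>)"
      using \<kappa>[OF \<open>c \<in> W\<close>] sum_bounded_above[of B "\<lambda>y. \<bar>inner c y\<bar>"] small by fastforce
    also have "\<dots> \<le> \<kappa> / 2 * norm c"
      unfolding \<delta>_def using \<open>0 < \<kappa>\<close> by (simp add: field_simps mult_left_mono)
    finally show "c = 0" using \<open>0 < \<kappa>\<close> by simp
  qed
  ultimately show thesis using that by blast
qed

lemma abs_inner_diff_normals_le:
  fixes G H E :: "'a::euclidean_space set"
  assumes "G \<subseteq> E" "H \<subseteq> E"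
    and u: "u \<in> orthogonal_comp G \<inter> dual_cone E" and v: "v \<in> orthogonal_comp H \<inter> dual_cone E"
    and "g \<in> G" "h \<in> H" "dist y g \<le> \<delta>" "dist y h \<le> \<delta>"
  shows "\<bar>inner (v - u) y\<bar> \<le> norm (v - u) * \<delta>"
proof -
  have "inner u g = 0" "0 \<le> inner v g" "inner v h = 0" "0 \<le> inner u h"
    using u v assms(1,2,5,6) unfolding orthogonal_comp_def orthogonal_def dual_cone_def
    by (auto simp: inner_commute)
  then have "0 \<le> inner (v - u) g" "inner (v - u) h \<le> 0" by (simp_all add: inner_diff_left)
  moreover have near: "\<bar>inner (v - u) (y - z)\<bar> \<le> norm (v - u) * \<delta>" if "dist y z \<le> \<delta>" for z
    using Cauchy_Schwarz_ineq2[of "v - u" "y - z"] mult_left_mono[OF that norm_ge_zero[of "v - u"]]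
    by (simp add: dist_norm)
  moreover have "inner (v - u) y = inner (v - u) g + inner (v - u) (y - g)"
    "inner (v - u) y = inner (v - u) h + inner (v - u) (y - h)"
    by (simp_all add: inner_diff_right)
  ultimately show ?thesis
    using near[OF assms(7)] near[OF assms(8)] unfolding abs_le_iff by linarith
qed

lemma abs_inner_diff_unit_le:
  fixes u v e :: "'a::real_inner"
  assumes "norm u = 1" "norm v = 1"
  shows "\<bar>inner (v - u) e\<bar> \<le> norm (v - u) * ((dist u e + dist v e) / 2)"
proof -
  have "inner (v - u) (u + v) = inner v v - inner u u"
    by (simp add: algebra_simps inner_commute)
  also have "\<dots> = 0" using assms by (simp add: dot_square_norm)
  finally have "inner (v - u) (u + v) = 0" .
  then have "2 * inner (v - u) e = inner (v - u) (e - u) + inner (v - u) (e - v)"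
    by (simp add: inner_add_right inner_diff_right)
  then have "2 * \<bar>inner (v - u) e\<bar> \<le> norm (v - u) * norm (e - u) + norm (v - u) * norm (e - v)"
    using Cauchy_Schwarz_ineq2[of "v - u" "e - u"] Cauchy_Schwarz_ineq2[of "v - u" "e - v"] by linarith
  then show ?thesis by (simp add: dist_norm norm_minus_commute field_simps)
qed

lemma exists_common_radius:
  fixes Q :: "'b \<Rightarrow> real \<Rightarrow> bool"
  assumes "finite B" "0 < \<delta>" and ex: "\<And>y. y \<in> B \<Longrightarrow> \<exists>r>0. Q y r"
    and antimono: "\<And>y r s. Q y r \<Longrightarrow> 0 < s \<Longrightarrow> s \<le> r \<Longrightarrow> Q y s"
  shows "\<exists>r>0. r \<le> \<delta> \<and> (\<forall>y\<in>B. Q y r)"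
proof -
  have "\<forall>\<^sub>F r in at_right 0. Q y r" if "y \<in> B" for y
  proof -
    obtain r0 where "0 < r0" "Q y r0" using ex \<open>y \<in> B\<close> by blast
    then show ?thesis unfolding eventually_at_right_field using antimono by (intro exI[of _ r0]) auto
  qed
  then have "\<forall>\<^sub>F r in at_right 0. \<forall>y\<in>B. Q y r"
    by (simp add: eventually_ball_finite_distrib[OF \<open>finite B\<close>])
  moreover have "\<forall>\<^sub>F r in at_right 0. r \<le> \<delta>"
    unfolding eventually_at_right_field using \<open>0 < \<delta>\<close> by (intro exI[of _ \<delta>]) auto
  moreover note eventually_at_right_less[of "0::real"]
  ultimately have "\<forall>\<^sub>F r in at_right 0. 0 < r \<and> r \<le> \<delta> \<and> (\<forall>y\<in>B. Q y r)"
    by eventually_elim blast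
  then show ?thesis using eventually_happens'[OF trivial_limit_at_right_real] by blast
qed

lemma closest_point_eq_imp_eq_if_inner_small:
  fixes E F B :: "'a::euclidean_space set" and e :: 'a
  assumes "finite B" "F \<subseteq> span B"
  defines "S \<equiv> span E \<inter> orthogonal_comp F \<inter> orthogonal_comp {e}"
  obtains \<delta> where "0 < \<delta>"
    "\<And>u v. u \<in> span E \<Longrightarrow> v \<in> span E \<Longrightarrow> closest_point S u = closest_point S v \<Longrightarrow>
       \<forall>y\<in>insert e B. \<bar>inner (v - u) y\<bar> \<le> norm (v - u) * \<delta> \<Longrightarrow> u = v"
proof -
  define W where "W = span E \<inter> orthogonal_comp S"
  have "subspace S" unfolding S_def by (intro subspace_inter subspace_span subspace_orthogonal_comp)
  have "subspace W" unfolding W_def by (intro subspace_inter subspace_span subspace_orthogonal_comp)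
  have "c = 0" if c: "c \<in> W" "\<forall>y\<in>insert e B. inner c y = 0" for c
  proof -
    have "c \<in> orthogonal_comp F"
      using orthogonal_to_span[of _ B c] c(2) \<open>F \<subseteq> span B\<close>
      unfolding orthogonal_comp_def orthogonal_def by (auto simp: inner_commute)
    moreover have "c \<in> orthogonal_comp {e}"
      using c(2) unfolding orthogonal_comp_def orthogonal_def by (simp add: inner_commute)
    ultimately have "c \<in> S" using c(1) unfolding W_def S_def by blast
    then have "inner c c = 0" using c(1) unfolding W_def orthogonal_comp_def orthogonal_def by blast
    then show "c = 0" by simp
  qed
  moreover have "finite (insert e B)" using \<open>finite B\<close> by simp
  ultimately obtain \<delta> where "0 < \<delta>"
    and small_0: "\<And>c. c \<in> W \<Longrightarrow> \<forall>y\<in>insert e B. \<bar>inner c y\<bar> \<le> norm c * \<delta> \<Longrightarrow> c = 0"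
    using subspace_eq_0_if_inner_small[OF \<open>subspace W\<close>] by blast
  moreover have "v - u \<in> W"
    if "u \<in> span E" "v \<in> span E" "closest_point S u = closest_point S v" for u v
  proof -
    have "inner s (v - u) = 0" if "s \<in> S" for s
      using closest_point_subspace_orthogonal[OF \<open>subspace S\<close> that, of u]
        closest_point_subspace_orthogonal[OF \<open>subspace S\<close> that, of v] \<open>closest_point S u = _\<close>
      by (simp add: inner_diff_right inner_commute)
    then show ?thesis
      using that(1,2) unfolding W_def orthogonal_comp_def orthogonal_def by (auto intro: span_diff)
  qed
  ultimately show thesis using that[of \<delta>] by force
qed

lemma inj_on_closest_point_near_normal:
  fixes E F :: "'a::euclidean_space set" and \<G> :: "'a set set" and ev :: "'a set \<Rightarrow> 'a"
  assumes sub: "\<And>G. G \<in> \<G> \<Longrightarrow> G \<subseteq> E"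
    and unit: "\<And>G. G \<in> \<G> \<Longrightarrow> norm (ev G) = 1"
    and normal: "\<And>G. G \<in> \<G> \<Longrightarrow> ev G \<in> orthogonal_comp G \<inter> dual_cone_span E"
    and near: "\<And>y \<delta>. y \<in> F \<Longrightarrow> 0 < \<delta> \<Longrightarrow> \<exists>r>0. \<forall>G\<in>\<G>. dist (ev G) e < r \<longrightarrow> G \<inter> ball y \<delta> \<noteq> {}"
  shows "\<exists>r>0. inj_on (closest_point (span E \<inter> orthogonal_comp F \<inter> orthogonal_comp {e}))
                      (ball e r \<inter> ev ` \<G>)"
proof -
  define S where "S = span E \<inter> orthogonal_comp F \<inter> orthogonal_comp {e}"
  obtain B where "B \<subseteq> F" "independent B" "F \<subseteq> span B"
    using maximal_independent_subset[of F] by blast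
  then have "finite B" using finiteI_independent by blast
  then obtain \<delta> where "0 < \<delta>" and eq: "\<And>u v. u \<in> span E \<Longrightarrow> v \<in> span E \<Longrightarrow>
      closest_point S u = closest_point S v \<Longrightarrow>
      \<forall>y\<in>insert e B. \<bar>inner (v - u) y\<bar> \<le> norm (v - u) * \<delta> \<Longrightarrow> u = v"
    using closest_point_eq_imp_eq_if_inner_small[OF _ \<open>F \<subseteq> span B\<close>] unfolding S_def by blast
  obtain r where "0 < r" "r \<le> \<delta>"
    and hits: "\<And>y G. y \<in> B \<Longrightarrow> G \<in> \<G> \<Longrightarrow> dist (ev G) e < r \<Longrightarrow> G \<inter> ball y \<delta> \<noteq> {}"
    using exists_common_radius[OF \<open>finite B\<close> \<open>0 < \<delta>\<close>, of "\<lambda>y r. \<forall>G\<in>\<G>. dist (ev G) e < r \<longrightarrow> G \<inter> ball y \<delta> \<noteq> {}"]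
      near \<open>B \<subseteq> F\<close> \<open>0 < \<delta>\<close> by fastforce
  have "u = v" if G: "G \<in> \<G>" "u = ev G" "dist u e < r" and H: "H \<in> \<G>" "v = ev H" "dist v e < r"
    and proj: "closest_point S u = closest_point S v" for G H u v
  proof (rule eq[OF _ _ proj])
    show "u \<in> span E" "v \<in> span E" using normal G(1,2) H(1,2) unfolding dual_cone_span_def by auto
    have "\<bar>inner (v - u) y\<bar> \<le> norm (v - u) * \<delta>" if "y \<in> B" for y
    proof -
      obtain g h where "g \<in> G" "dist y g < \<delta>" "h \<in> H" "dist y h < \<delta>"
        using hits[OF \<open>y \<in> B\<close> G(1)] hits[OF \<open>y \<in> B\<close> H(1)] G(2,3) H(2,3) by (auto simp: dist_commute)
      moreover have "u \<in> orthogonal_comp G \<inter> dual_cone E" "v \<in> orthogonal_comp H \<inter> dual_cone E"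
        using normal G(1,2) H(1,2) unfolding dual_cone_span_def by auto
      ultimately show ?thesis
        using abs_inner_diff_normals_le[OF sub[OF G(1)] sub[OF H(1)]] by (simp add: less_imp_le)
    qed
    moreover have "\<bar>inner (v - u) e\<bar> \<le> norm (v - u) * \<delta>"
    proof -
      have "(dist u e + dist v e) / 2 \<le> \<delta>" using G(3) H(3) \<open>r \<le> \<delta>\<close> by simp
      then show ?thesis
        using abs_inner_diff_unit_le[OF unit[OF G(1)] unit[OF H(1)], of e] G(2) H(2)
          mult_left_mono[of _ \<delta> "norm (v - u)"] by fastforce
    qed
    ultimately show "\<forall>y\<in>insert e B. \<bar>inner (v - u) y\<bar> \<le> norm (v - u) * \<delta>" by blast
  qed
  then have "inj_on (closest_point S) (ball e r \<inter> ev ` \<G>)"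
    by (auto intro!: inj_onI simp: dist_commute)
  then show ?thesis using \<open>0 < r\<close> unfolding S_def by blast
qed

section \<open>The projection onto the half space\<close>

lemma e_vec_face_layer:
  fixes C :: "'a::euclidean_space set"
  assumes "convex C" "conic C" "locally_smooth C" "1 \<le> j" "j \<le> face_depth C"
    and "E \<in> face_layer C (j - 1)" "G \<in> face_layer C j" "G \<subseteq> E"
  shows "norm (e_vec G E) = 1" "e_vec G E \<in> orthogonal_comp G \<inter> dual_cone_span E"
  using e_vec_maximal_lower_face[OF assms(1-3) _ face_layer_maximal_lower_face[OF assms(4-7)] assms(8)]
    assms(6) unfolding face_layer_def by blast+

lemma face_layer_exists_pos_inner:
  fixes C :: "'a::euclidean_space set"
  assumes "convex C" "conic C" "locally_smooth C" "1 \<le> j" "j \<le> face_depth C"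
    and E: "E \<in> face_layer C (j - 1)" and F: "F \<in> face_layer C j" "F \<subseteq> E"
    and G: "G \<in> face_layer C j" "G \<subseteq> E" "G \<noteq> F"
  shows "\<exists>g\<in>G. 0 < inner (e_vec F E) g"
proof (rule maximal_lower_face_exists_pos_inner[OF assms(1)])
  show "E face_of C" using E unfolding face_layer_def by blast
  show "maximal_lower_face C E F" "maximal_lower_face C E G"
    using face_layer_maximal_lower_face[OF assms(4,5) E] F(1) G(1) by blast+
  show "e_vec F E \<in> orthogonal_comp F \<inter> dual_cone_span E" "e_vec F E \<noteq> 0"
    using e_vec_face_layer[OF assms(1-5) E F] by auto
qed (use F G in auto)

lemma face_layer_hits_ball_near:
  fixes C :: "'a::euclidean_space set"
  assumes "convex C" "conic C" "closed C" "facially_compact C" "locally_smooth C"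
    and "1 \<le> j" "j \<le> face_depth C"
    and E: "E \<in> face_layer C (j - 1)" and F: "F \<in> face_layer C j" "F \<subseteq> E"
    and "y \<in> F" "0 < \<delta>"
  shows "\<exists>r>0. \<forall>G\<in>{G \<in> face_layer C j. G \<subseteq> E}.
           dist (e_vec G E) (e_vec F E) < r \<longrightarrow> G \<inter> ball y \<delta> \<noteq> {}"
proof -
  have closed: "closed G" if "G face_of C" for G
    using face_of_imp_closed assms(1,3) that by blast
  have "compactin fell_topology (face_layer C j)"
    using assms(4,7) unfolding facially_compact_def by blast
  moreover have "closed G" if "G \<in> face_layer C j" for G
    using closed that unfolding face_layer_def by blast
  moreover have "closed E" using closed E unfolding face_layer_def by blast
  moreover have "norm (e_vec F E) = 1" using e_vec_face_layer[OF assms(1,2,5-7) E F] by blast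
  moreover have "inner (e_vec G E) g = 0" if "G \<in> face_layer C j" "G \<subseteq> E" "g \<in> G" for G g
    using e_vec_face_layer[OF assms(1,2,5-7) E that(1,2)] that(3)
    unfolding orthogonal_comp_def orthogonal_def by (auto simp: inner_commute)
  moreover note face_layer_exists_pos_inner[OF assms(1,2,5-7) E F]
  ultimately have "\<exists>r>0. \<forall>G\<in>face_layer C j. G \<subseteq> E \<longrightarrow>
      dist (e_vec G E) (e_vec F E) < r \<longrightarrow> G \<inter> ball y \<delta> \<noteq> {}"
    using \<open>y \<in> F\<close> \<open>0 < \<delta>\<close> by (rule fell_compact_hits_ball_near)
  then show ?thesis by (simp add: imp_conjL Ball_def)
qed

lemma inj_on_closest_point_half_space:
  fixes C :: "'a::euclidean_space set"
  assumes "convex C" "conic C" "closed C" "facially_compact C" "locally_smooth C"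
    and "1 \<le> j" "j \<le> face_depth C"
    and E: "E \<in> face_layer C (j - 1)" and F: "F \<in> face_layer C j" "F \<subseteq> E"
  shows "\<exists>r>0. inj_on (closest_point (half_space E F))
                  (ball (e_vec F E) r \<inter> (\<lambda>G. e_vec G E) ` {G \<in> face_layer C j. G \<subseteq> E})"
  unfolding half_space_def
proof (rule inj_on_closest_point_near_normal)
  fix G assume "G \<in> {G \<in> face_layer C j. G \<subseteq> E}"
  then show "G \<subseteq> E" "norm (e_vec G E) = 1" "e_vec G E \<in> orthogonal_comp G \<inter> dual_cone_span E"
    using e_vec_face_layer[OF assms(1,2,5-7) E] by auto
qed (rule face_layer_hits_ball_near[OF assms])

lemma flag_pairs_fst_image:
  assumes "E \<in> face_layer C (j - 1)"
  shows "(\<lambda>(E', G). f G E') ` {P \<in> flag_pairs C j. fst P = E} =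
           (\<lambda>G. f G E) ` {G \<in> face_layer C j. G \<subseteq> E}"
  using assms unfolding flag_pairs_def by force

theorem mainTheorem14:
  fixes \<Omega> :: "'a::euclidean_space set" and j :: nat and E F :: "'a set"
  assumes "convex_cone \<Omega>" and "closed \<Omega>"
    and "\<Omega> \<inter> uminus ` \<Omega> \<subseteq> {0}"
    and "interior \<Omega> \<noteq> {}"
    and "facially_compact (dual_cone \<Omega>)"
    and "locally_smooth (dual_cone \<Omega>)"
    and "1 \<le> j" and "j \<le> face_depth (dual_cone \<Omega>)"
    and "(E, F) \<in> flag_pairs (dual_cone \<Omega>) j"
  shows "\<exists>U. open U \<and> e_vec F E \<in> U \<and>
           inj_on (closest_point (half_space E F))
             (U \<inter> (\<lambda>(E', G). e_vec G E') ` {P \<in> flag_pairs (dual_cone \<Omega>) j. fst P = E})"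
proof -
  have E: "E \<in> face_layer (dual_cone \<Omega>) (j - 1)" and F: "F \<in> face_layer (dual_cone \<Omega>) j" "F \<subseteq> E"
    using assms(9) unfolding flag_pairs_def by auto
  obtain r where "0 < r" and "inj_on (closest_point (half_space E F))
      (ball (e_vec F E) r \<inter> (\<lambda>G. e_vec G E) ` {G \<in> face_layer (dual_cone \<Omega>) j. G \<subseteq> E})"
    using inj_on_closest_point_half_space[OF convex_dual_cone conic_dual_cone closed_dual_cone
        assms(5-8) E F] by blast
  then show ?thesis
    unfolding flag_pairs_fst_image[OF E] by (intro exI[of _ "ball (e_vec F E) r"]) simp
qed

end
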